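(* Fix $\mu>0$. As $D\to\infty$ through odd integers, the probability mass function of $\mathrm{MedPois}_\mu^{(D)}$ converges pointwise on $\mathbb{N}_0$ to one of the following: (i) a point mass $\delta_m$ with $m\in\{\lfloor\mu\rfloor,\lceil\mu\rceil\}$; or (ii) the discrete uniform distribution on two consecutive integers $\{m,m+1\}$ with $\{m,m+1\}\cap\{\lfloor\mu\rfloor,\lceil\mu\rceil\}\neq\emptyset$.
   Context: For odd $D$, $\mathrm{MedPois}_\mu^{(D)}$ is the law of the sample median, i.e. the $\lceil D/2\rceil$-th smallest, of $D$ i.i.d. Poisson($\mu$) random variables. *)

theory Defs
  imports "HOL-Probability.Probability"
begin

text \<open>Sample median of a list of odd length D: the ceil(D/2)-th smallest entry
  (1-indexed), i.e. index D div 2 (0-indexed) of the sorted list.\<close>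
definition sample_median :: "nat list \<Rightarrow> nat" where
  "sample_median xs = sort xs ! (length xs div 2)"

definition MedPois :: "real \<Rightarrow> nat \<Rightarrow> nat pmf" where
  "MedPois mu D = map_pmf sample_median (replicate_pmf D (poisson_pmf mu))"

end

theory Submission
  imports Defs "HOL-Real_Asymp.Real_Asymp"
begin

text \<open>The median of \<open>2n + 1\<close> samples is at most \<open>k\<close> iff more than \<open>n\<close> of them are, so its cdf
  at \<open>k\<close> is \<open>P(Bin(2n + 1, F k) > n)\<close> with \<open>F\<close> the Poisson(\<open>\<mu>\<close>) cdf. By Hoeffding's
  inequality and the symmetry \<open>q \<leftrightarrow> 1 - q\<close> this tends to 0, 1/2 or 1 according as
  \<open>F k < 1/2\<close>, \<open>= 1/2\<close> or \<open>> 1/2\<close>. Since \<open>F\<close> is strictly increasing, the limit law sits at the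
  Poisson median \<open>m\<close> (the least \<open>k\<close> with \<open>F k \<ge> 1/2\<close>), split evenly between \<open>m\<close> and \<open>m + 1\<close>
  when \<open>F m = 1/2\<close>. Finally \<open>m\<close> is within one step of \<open>\<lfloor>\<mu>\<rfloor>, \<lceil>\<mu>\<rceil>\<close>: the Poisson(\<open>n\<close>) law has
  median exactly \<open>n\<close>, and \<open>F\<close> decreases in the rate.\<close>

definition poisson_cdf :: "real \<Rightarrow> nat \<Rightarrow> real" where
  "poisson_cdf s k = (\<Sum>j\<le>k. exp (-s) * s ^ j / fact j)"

lemma prob_poisson_atMost:
  "0 < s \<Longrightarrow> measure_pmf.prob (poisson_pmf s) {..k} = poisson_cdf s k"
  unfolding poisson_cdf_def by (simp add: measure_measure_pmf_finite algebra_simps)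

lemma poisson_cdf_Suc:
  "poisson_cdf s (Suc k) = poisson_cdf s k + exp (-s) * s ^ Suc k / fact (Suc k)"
  by (simp add: poisson_cdf_def)

lemma poisson_cdf_0_left: "poisson_cdf 0 k = 1"
  unfolding poisson_cdf_def by (induction k) auto

lemma poisson_cdf_nonneg: "0 \<le> s \<Longrightarrow> 0 \<le> poisson_cdf s k"
  unfolding poisson_cdf_def by (intro sum_nonneg) auto

lemma strict_mono_poisson_cdf: "0 < s \<Longrightarrow> strict_mono (poisson_cdf s)"
  by (rule strict_monoI_Suc) (simp add: poisson_cdf_Suc)

lemma has_real_derivative_poisson_term:
  "((\<lambda>s. exp (-s) * s ^ Suc k / fact (Suc k)) has_real_derivative
      exp (-s) * s ^ k / fact k - exp (-s) * s ^ Suc k / fact (Suc k)) (at s)"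
proof -
  have "((\<lambda>s. exp (-s)) has_real_derivative - exp (-s)) (at s)"
    by (auto intro!: derivative_eq_intros)
  from DERIV_mult[OF this DERIV_pow[of "Suc k"]]
  have "((\<lambda>s. exp (-s) * s ^ Suc k) has_real_derivative
          exp (-s) * (real (Suc k) * s ^ k) - exp (-s) * s ^ Suc k) (at s)"
    by (simp add: algebra_simps)
  from DERIV_cdivide[OF this, of "fact (Suc k)"] show ?thesis
    by (simp add: diff_divide_distrib del: of_nat_Suc)
qed

lemma has_real_derivative_poisson_cdf:
  "((\<lambda>s. poisson_cdf s k) has_real_derivative -(exp (-s) * s ^ k / fact k)) (at s)"
proof (induction k)
  case 0
  show ?case unfolding poisson_cdf_def by (auto intro!: derivative_eq_intros)
next
  case (Suc k)
  from DERIV_add[OF Suc has_real_derivative_poisson_term[of k]] show ?case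
    by (simp add: poisson_cdf_Suc)
qed

lemma poisson_cdf_antimono: "0 \<le> a \<Longrightarrow> a \<le> b \<Longrightarrow> poisson_cdf b k \<le> poisson_cdf a k"
  by (rule deriv_nonpos_imp_antimono[OF has_real_derivative_poisson_cdf]) auto

lemma poisson_cdf_le_1: "0 \<le> s \<Longrightarrow> poisson_cdf s k \<le> 1"
  using poisson_cdf_antimono[of 0 s k] by (simp add: poisson_cdf_0_left)

lemma ln_ratio_lower_bound:
  fixes N x :: real
  assumes "0 < N" "0 \<le> x" "x < N"
  shows "2 * x \<le> N * (ln (N + x) - ln (N - x))"
proof -
  define \<phi> where "\<phi> t = N * (ln (N + t) - ln (N - t)) - 2 * t" for t
  have "\<phi> 0 \<le> \<phi> x"
  proof (rule deriv_nonneg_imp_mono[where g = \<phi> and g' = "\<lambda>t. 2 * t\<^sup>2 / ((N + t) * (N - t))"])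
    fix t assume t: "t \<in> {0..x}"
    then have "0 < N + t" "0 < N - t" using assms by auto
    then show "(\<phi> has_real_derivative 2 * t\<^sup>2 / ((N + t) * (N - t))) (at t)"
      unfolding \<phi>_def by (auto intro!: derivative_eq_intros simp: field_simps power2_eq_square)
    show "0 \<le> 2 * t\<^sup>2 / ((N + t) * (N - t))"
      using \<open>0 < N + t\<close> \<open>0 < N - t\<close> by simp
  qed (use assms in auto)
  then show ?thesis unfolding \<phi>_def by simp
qed

lemma exp_neg_mul_power_reflect_le:
  fixes x :: real
  assumes "0 \<le> x" "x \<le> real n"
  shows "exp (-(n - x)) * (n - x) ^ n \<le> exp (-(n + x)) * (n + x) ^ n"
proof (cases "x = n")
  case False
  with assms have x: "0 \<le> x" "x < n" and "0 < real n" by auto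
  have "exp (2 * x) \<le> exp (n * (ln (n + x) - ln (n - x)))"
    using ln_ratio_lower_bound[OF \<open>0 < real n\<close> x] by simp
  also have "\<dots> = ((n + x) / (n - x)) ^ n"
    using x by (simp add: exp_of_nat_mult exp_diff)
  finally have "exp (2 * x) * (n - x) ^ n \<le> (n + x) ^ n"
    using x by (simp add: power_divide pos_le_divide_eq)
  then have "exp (-(n + x)) * (exp (2 * x) * (n - x) ^ n) \<le> exp (-(n + x)) * (n + x) ^ n"
    by (intro mult_left_mono) auto
  then show ?thesis
    by (simp add: mult.assoc [symmetric] exp_add [symmetric])
qed (simp add: power_0_left)

lemma poisson_cdf_self_ge_half: "1 / 2 \<le> poisson_cdf n n"
proof -
  \<comment> \<open>\<open>H x\<close> is the drop of the cdf (in the rate) over \<open>[n, n + x]\<close> minus its drop over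
     \<open>[n - x, n]\<close>; it grows because the rate derivative \<open>-g\<close> satisfies \<open>g (n + x) \<ge> g (n - x)\<close>.\<close>
  define g where "g s = exp (-s) * s ^ n / fact n" for s :: real
  define H where "H x = 2 * poisson_cdf n n - poisson_cdf (n + x) n - poisson_cdf (n - x) n" for x :: real
  have "H 0 \<le> H (real n)"
  proof (rule deriv_nonneg_imp_mono[where g = H and g' = "\<lambda>x. g (n + x) - g (n - x)"])
    fix x assume x: "x \<in> {0..real n}"
    have "((\<lambda>x. poisson_cdf (n + x) n) has_real_derivative - g (n + x) * 1) (at x)"
      "((\<lambda>x. poisson_cdf (n - x) n) has_real_derivative - g (n - x) * (-1)) (at x)"
      unfolding g_def by (rule DERIV_chain2[OF has_real_derivative_poisson_cdf];
                          auto intro!: derivative_eq_intros)+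
    from DERIV_diff[OF DERIV_diff[OF DERIV_const this(1)] this(2)]
    show "(H has_real_derivative g (n + x) - g (n - x)) (at x)"
      unfolding H_def by simp
    show "0 \<le> g (n + x) - g (n - x)"
      using exp_neg_mul_power_reflect_le[of x n] x unfolding g_def by (simp add: divide_right_mono)
  qed simp
  then show ?thesis
    using poisson_cdf_nonneg[of "2 * real n" n] by (simp add: H_def poisson_cdf_0_left)
qed

lemma fact_add_le_power_mul_fact:
  "j < n \<Longrightarrow> fact (n + j) \<le> real n ^ (2 * j + 1) * fact (n - Suc j)"
proof (induction j)
  case 0
  then show ?case by (cases n) auto
next
  case (Suc j)
  then have fact_eq: "fact (n - Suc j) = real (n - Suc j) * fact (n - Suc (Suc j))"
    by (metis Suc_diff_Suc fact_Suc of_nat_fact)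
  have square_bound: "real (n + Suc j) * real (n - Suc j) \<le> real n * real n"
    using Suc.prems by (simp add: of_nat_diff algebra_simps)
  have "fact (n + Suc j) = real (n + Suc j) * fact (n + j)"
    by simp
  also have "\<dots> \<le> real (n + Suc j) * (real n ^ (2 * j + 1) * fact (n - Suc j))"
    using Suc by (intro mult_left_mono) auto
  also have "\<dots> = (real (n + Suc j) * real (n - Suc j)) * real n ^ (2 * j + 1) * fact (n - Suc (Suc j))"
    unfolding fact_eq by (simp only: ac_simps)
  also have "\<dots> \<le> (real n * real n) * real n ^ (2 * j + 1) * fact (n - Suc (Suc j))"
    using square_bound by (intro mult_right_mono) auto
  also have "\<dots> = real n ^ (2 * Suc j + 1) * fact (n - Suc (Suc j))"
    by (simp add: algebra_simps)
  finally show ?case .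
qed

lemma poisson_cdf_self_pred_le_half:
  assumes "1 \<le> n"
  shows "poisson_cdf n (n - 1) \<le> 1 / 2"
proof -
  define p where "p k = exp (- real n) * real n ^ k / fact k" for k
  have cdf_eq: "poisson_cdf n (k - 1) = (\<Sum>i<k. p i)" if "1 \<le> k" for k
    unfolding poisson_cdf_def p_def using that by (intro sum.cong) auto
  have reflect_le: "p (n - Suc j) \<le> p (n + j)" if "j < n" for j
  proof -
    have "n + j = (n - Suc j) + (2 * j + 1)"
      using that by simp
    then have "real n ^ (n + j) = real n ^ (n - Suc j) * real n ^ (2 * j + 1)"
      by (metis power_add)
    then have "real n ^ (n - Suc j) * fact (n + j) \<le> real n ^ (n + j) * fact (n - Suc j)"
      using fact_add_le_power_mul_fact[OF that] by (simp add: mult_left_mono mult.assoc)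
    then show ?thesis
      unfolding p_def by (simp add: divide_simps mult.commute)
  qed
  have split: "(\<Sum>i<n + m. p i) = (\<Sum>i<n. p i) + (\<Sum>j<m. p (n + j))" for m
    by (induction m) auto
  have "poisson_cdf n (n - 1) = (\<Sum>j<n. p (n - Suc j))"
    using cdf_eq[OF assms] by (simp add: sum.nat_diff_reindex)
  also have "\<dots> \<le> (\<Sum>j<n. p (n + j))"
    by (intro sum_mono reflect_le) simp
  finally have "2 * poisson_cdf n (n - 1) \<le> (\<Sum>i<n + n. p i)"
    using cdf_eq[OF assms] split[of n] by simp
  also have "\<dots> = poisson_cdf n (n + n - 1)"
    using assms by (intro cdf_eq [symmetric]) simp
  also have "\<dots> \<le> 1"
    by (simp add: poisson_cdf_le_1)
  finally show ?thesis by simp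
qed

lemma poisson_cdf_ceiling_ge_half:
  assumes "0 \<le> mu"
  shows "1 / 2 \<le> poisson_cdf mu (nat \<lceil>mu\<rceil>)"
proof -
  have "mu \<le> nat \<lceil>mu\<rceil>"
    by linarith
  then show ?thesis
    using assms poisson_cdf_self_ge_half[of "nat \<lceil>mu\<rceil>"]
      poisson_cdf_antimono[of mu "nat \<lceil>mu\<rceil>" "nat \<lceil>mu\<rceil>"]
    by linarith
qed

lemma poisson_cdf_floor_pred_le_half:
  assumes "1 \<le> mu"
  shows "poisson_cdf mu (nat \<lfloor>mu\<rfloor> - 1) \<le> 1 / 2"
proof -
  have "1 \<le> nat \<lfloor>mu\<rfloor>" "nat \<lfloor>mu\<rfloor> \<le> mu"
    using assms by linarith+
  then show ?thesis
    using poisson_cdf_self_pred_le_half[of "nat \<lfloor>mu\<rfloor>"]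
      poisson_cdf_antimono[of "nat \<lfloor>mu\<rfloor>" mu "nat \<lfloor>mu\<rfloor> - 1"]
    by linarith
qed

definition poisson_median :: "real \<Rightarrow> nat" where
  "poisson_median mu = (LEAST k. 1 / 2 \<le> poisson_cdf mu k)"

lemma poisson_median_le_ceiling: "0 \<le> mu \<Longrightarrow> poisson_median mu \<le> nat \<lceil>mu\<rceil>"
  unfolding poisson_median_def by (rule Least_le) (rule poisson_cdf_ceiling_ge_half)

lemma poisson_cdf_median_ge_half: "0 \<le> mu \<Longrightarrow> 1 / 2 \<le> poisson_cdf mu (poisson_median mu)"
  unfolding poisson_median_def by (rule LeastI) (rule poisson_cdf_ceiling_ge_half)

lemma poisson_cdf_below_median: "k < poisson_median mu \<Longrightarrow> poisson_cdf mu k < 1 / 2"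
  unfolding poisson_median_def using not_less_Least by force

lemma floor_le_Suc_poisson_median:
  assumes "0 < mu"
  shows "nat \<lfloor>mu\<rfloor> \<le> poisson_median mu + 1"
proof (rule ccontr)
  assume "\<not> ?thesis"
  then have "1 \<le> mu" "poisson_median mu < nat \<lfloor>mu\<rfloor> - 1"
    by linarith+
  then have "poisson_cdf mu (poisson_median mu) < poisson_cdf mu (nat \<lfloor>mu\<rfloor> - 1)"
    using strict_mono_poisson_cdf[OF assms] by (simp add: strict_mono_less)
  then show False
    using assms poisson_cdf_floor_pred_le_half[OF \<open>1 \<le> mu\<close>] poisson_cdf_median_ge_half[of mu]
    by linarith
qed

lemma floor_le_poisson_median:
  assumes "0 < mu" "1 / 2 < poisson_cdf mu (poisson_median mu)"
  shows "nat \<lfloor>mu\<rfloor> \<le> poisson_median mu"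
proof (rule ccontr)
  assume "\<not> ?thesis"
  then have "1 \<le> mu" "poisson_median mu \<le> nat \<lfloor>mu\<rfloor> - 1"
    by linarith+
  then have "poisson_cdf mu (poisson_median mu) \<le> poisson_cdf mu (nat \<lfloor>mu\<rfloor> - 1)"
    using strict_mono_poisson_cdf[OF assms(1)] by (simp add: strict_mono_less_eq)
  then show False
    using assms poisson_cdf_floor_pred_le_half[OF \<open>1 \<le> mu\<close>] by linarith
qed

lemma poisson_median_mem_floor_ceiling:
  assumes "0 < mu" "1 / 2 < poisson_cdf mu (poisson_median mu)"
  shows "poisson_median mu \<in> {nat \<lfloor>mu\<rfloor>, nat \<lceil>mu\<rceil>}"
  using floor_le_poisson_median[OF assms] poisson_median_le_ceiling[of mu] assms(1)
  by (auto simp: le_Suc_eq) linarith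

lemma poisson_median_adjacent_floor_ceiling:
  "0 < mu \<Longrightarrow> {poisson_median mu, poisson_median mu + 1} \<inter> {nat \<lfloor>mu\<rfloor>, nat \<lceil>mu\<rceil>} \<noteq> {}"
  using floor_le_Suc_poisson_median[of mu] poisson_median_le_ceiling[of mu]
  by auto linarith

lemma sorted_nth_le_iff:
  "sorted ys \<Longrightarrow> i < length ys \<Longrightarrow> ys ! i \<le> (k :: 'a :: linorder) \<longleftrightarrow> i < length (filter (\<lambda>x. x \<le> k) ys)"
proof (induction ys arbitrary: i)
  case (Cons a zs)
  show ?case
  proof (cases "a \<le> k")
    case True
    with Cons show ?thesis by (cases i) auto
  next
    case False
    have "\<forall>z \<in> set zs. a \<le> z"
      using Cons.prems(1) by simp
    with False have "filter (\<lambda>x. x \<le> k) zs = []" "k < (a # zs) ! i"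
      using Cons.prems(2) by (auto simp: filter_empty_conv nth_Cons split: nat.split)
        (metis le_less_trans not_le nth_mem)
    with False show ?thesis by simp
  qed
qed simp

lemma sample_median_le_iff:
  assumes "length xs = 2 * n + 1"
  shows "sample_median xs \<le> k \<longleftrightarrow> n < length (filter (\<lambda>x. x \<le> k) xs)"
proof -
  have "length (filter (\<lambda>x. x \<le> k) (sort xs)) = length (filter (\<lambda>x. x \<le> k) xs)"
    by (metis mset_filter mset_sort size_mset)
  then show ?thesis
    unfolding sample_median_def using assms sorted_nth_le_iff[of "sort xs" n k] by simp
qed

lemma replicate_pmf_map_pmf: "replicate_pmf m (map_pmf f p) = map_pmf (map f) (replicate_pmf m p)"
  by (induction m) (simp_all add: map_pmf_def bind_assoc_pmf bind_return_pmf)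

lemma map_pmf_eq_bernoulli_pmf: "map_pmf P p = bernoulli_pmf (measure_pmf.prob p {x. P x})"
proof (rule pmf_eqI)
  fix b
  have "measure_pmf.prob p {x. \<not> P x} = 1 - measure_pmf.prob p {x. P x}"
    using measure_pmf.prob_compl[of "{x. P x}" p] by (simp add: Compl_eq_Diff_UNIV [symmetric] Collect_neg_eq)
  then show "pmf (map_pmf P p) b = pmf (bernoulli_pmf (measure_pmf.prob p {x. P x})) b"
    by (cases b) (simp_all add: pmf_map vimage_def)
qed

lemma map_pmf_length_filter_replicate_pmf:
  "map_pmf (\<lambda>xs. length (filter P xs)) (replicate_pmf m p) =
     binomial_pmf m (measure_pmf.prob p {x. P x})"
proof -
  have "binomial_pmf m (measure_pmf.prob p {x. P x}) =
          map_pmf (length \<circ> filter id) (replicate_pmf m (map_pmf P p))"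
    by (simp add: binomial_pmf_altdef map_pmf_eq_bernoulli_pmf)
  also have "\<dots> = map_pmf (\<lambda>xs. length (filter P xs)) (replicate_pmf m p)"
    by (simp add: replicate_pmf_map_pmf pmf.map_comp o_def filter_map)
  finally show ?thesis ..
qed

definition binomial_majority :: "nat \<Rightarrow> real \<Rightarrow> real" where
  "binomial_majority n q = measure_pmf.prob (binomial_pmf (2 * n + 1) q) {n<..}"

lemma prob_sample_median_atMost:
  "measure_pmf.prob (map_pmf sample_median (replicate_pmf (2 * n + 1) p)) {..k} =
     binomial_majority n (measure_pmf.prob p {..k})"
proof -
  let ?R = "replicate_pmf (2 * n + 1) p"
  let ?count = "\<lambda>xs. length (filter (\<lambda>x. x \<le> k) xs)"
  have "measure_pmf.prob (map_pmf sample_median ?R) {..k} =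
      measure_pmf.prob (map_pmf (\<lambda>xs. sample_median xs \<le> k) ?R) {True}"
    by (simp add: vimage_def)
  also have "map_pmf (\<lambda>xs. sample_median xs \<le> k) ?R = map_pmf (\<lambda>xs. n < ?count xs) ?R"
    using set_replicate_pmf[of "2 * n + 1" p] by (intro map_pmf_cong refl sample_median_le_iff) blast
  also have "measure_pmf.prob \<dots> {True} = measure_pmf.prob (map_pmf ?count ?R) {n<..}"
    by (simp add: vimage_def)
  finally show ?thesis
    unfolding map_pmf_length_filter_replicate_pmf binomial_majority_def atMost_def .
qed

lemma binomial_pmf_one_minus:
  assumes "q \<in> {0..1}"
  shows "binomial_pmf m (1 - q) = map_pmf (\<lambda>k. m - k) (binomial_pmf m q)"
proof -
  let ?R = "replicate_pmf m (bernoulli_pmf q)"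
  have prob_bernoulli: "measure_pmf.prob (bernoulli_pmf q) {x. x} = q"
    "measure_pmf.prob (bernoulli_pmf q) {x. \<not> x} = 1 - q"
  proof -
    have "{x. x} = {True}" "{x. \<not> x} = {False}"
      by auto
    with assms show "measure_pmf.prob (bernoulli_pmf q) {x. x} = q"
      "measure_pmf.prob (bernoulli_pmf q) {x. \<not> x} = 1 - q"
      by (simp_all add: measure_pmf_single)
  qed
  have "binomial_pmf m (1 - q) = map_pmf (\<lambda>xs. length (filter Not xs)) ?R"
    using map_pmf_length_filter_replicate_pmf[of Not m] by (simp add: prob_bernoulli)
  also have "\<dots> = map_pmf (\<lambda>xs. m - length (filter (\<lambda>x. x) xs)) ?R"
  proof (intro map_pmf_cong refl)
    fix xs assume "xs \<in> set_pmf ?R"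
    then show "length (filter Not xs) = m - length (filter (\<lambda>x. x) xs)"
      using sum_length_filter_compl[of "\<lambda>x. x" xs] by (simp add: set_replicate_pmf)
  qed
  also have "\<dots> = map_pmf (\<lambda>k. m - k) (map_pmf (\<lambda>xs. length (filter (\<lambda>x. x) xs)) ?R)"
    by (simp add: pmf.map_comp o_def)
  also have "\<dots> = map_pmf (\<lambda>k. m - k) (binomial_pmf m q)"
    by (simp only: map_pmf_length_filter_replicate_pmf prob_bernoulli)
  finally show ?thesis .
qed

lemma binomial_majority_one_minus:
  assumes "q \<in> {0..1}"
  shows "binomial_majority n (1 - q) = 1 - binomial_majority n q"
proof -
  have "(\<lambda>k. 2 * n + 1 - k) -` {n<..} = {..n}"
    by auto
  moreover have "{..n} = UNIV - {n<..}"
    by auto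
  ultimately have "binomial_majority n (1 - q) = measure_pmf.prob (binomial_pmf (2 * n + 1) q) (UNIV - {n<..})"
    unfolding binomial_majority_def binomial_pmf_one_minus[OF assms] by simp
  with measure_pmf.prob_compl[of "{n<..}" "binomial_pmf (2 * n + 1) q"] show ?thesis
    unfolding binomial_majority_def by simp
qed

lemma binomial_majority_half: "binomial_majority n (1 / 2) = 1 / 2"
  using binomial_majority_one_minus[of "1 / 2" n] by simp

lemma binomial_majority_tendsto_0:
  assumes "0 \<le> q" "q < 1 / 2"
  shows "(\<lambda>n. binomial_majority n q) \<longlonglongrightarrow> 0"
proof (rule tendsto_sandwich[of "\<lambda>_. 0" _ _ "\<lambda>n. exp (-2 * real (2 * n + 1) * (1 / 2 - q)\<^sup>2)"])
  have binomial: "binomial_distribution q"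
    using assms by unfold_locales auto
  have "binomial_majority n q \<le> exp (-2 * real (2 * n + 1) * (1 / 2 - q)\<^sup>2)" for n
  proof -
    have "{n<..} \<subseteq> {k. q + (1 / 2 - q) \<le> real k / real (2 * n + 1)}"
      by (auto simp: field_simps)
    then have "binomial_majority n q \<le>
        measure_pmf.prob (binomial_pmf (2 * n + 1) q) {k. q + (1 / 2 - q) \<le> real k / real (2 * n + 1)}"
      unfolding binomial_majority_def by (intro measure_pmf.finite_measure_mono) auto
    also have "\<dots> \<le> exp (-2 * real (2 * n + 1) * (1 / 2 - q)\<^sup>2)"
      using binomial_distribution.prob_ge'[OF binomial, of "2 * n + 1" "1 / 2 - q"] assms by simp
    finally show ?thesis .
  qed
  then show "\<forall>\<^sub>F n in sequentially. binomial_majority n q \<le> exp (-2 * real (2 * n + 1) * (1 / 2 - q)\<^sup>2)"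
    by simp
  show "(\<lambda>n. exp (-2 * real (2 * n + 1) * (1 / 2 - q)\<^sup>2)) \<longlonglongrightarrow> 0"
    using assms by real_asymp
qed (simp_all add: binomial_majority_def)

definition majority_limit :: "real \<Rightarrow> real" where
  "majority_limit q = (if q < 1 / 2 then 0 else if q = 1 / 2 then 1 / 2 else 1)"

lemma binomial_majority_tendsto:
  assumes "q \<in> {0..1}"
  shows "(\<lambda>n. binomial_majority n q) \<longlonglongrightarrow> majority_limit q"
proof -
  consider "q < 1 / 2" | "q = 1 / 2" | "1 / 2 < q"
    by linarith
  then show ?thesis
  proof cases
    case 1
    then show ?thesis
      using assms binomial_majority_tendsto_0 by (simp add: majority_limit_def)
  next
    case 2
    show ?thesis
      unfolding 2 by (simp add: majority_limit_def binomial_majority_half)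
  next
    case 3
    then have "(\<lambda>n. 1 - binomial_majority n (1 - q)) \<longlonglongrightarrow> 1 - 0"
      using assms by (intro tendsto_diff tendsto_const binomial_majority_tendsto_0) auto
    then show ?thesis
      using assms 3 by (simp add: binomial_majority_one_minus majority_limit_def)
  qed
qed

definition cdf_increment :: "(nat \<Rightarrow> real) \<Rightarrow> nat \<Rightarrow> real" where
  "cdf_increment G k = G k - (if k = 0 then 0 else G (k - 1))"

lemma pmf_eq_cdf_increment: "pmf M k = cdf_increment (\<lambda>j. measure_pmf.prob M {..j}) k"
proof (cases k)
  case 0
  then show ?thesis by (simp add: cdf_increment_def measure_pmf_single)
next
  case (Suc j)
  then show ?thesis by (simp add: cdf_increment_def measure_measure_pmf_finite)
qed

lemma tendsto_cdf_increment:
  "(\<And>j. (\<lambda>n. G n j) \<longlonglongrightarrow> H j) \<Longrightarrow> (\<lambda>n. cdf_increment (G n) k) \<longlonglongrightarrow> cdf_increment H k"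
  unfolding cdf_increment_def by (auto intro!: tendsto_diff)

lemma cdf_increment_majority_limit:
  assumes "strict_mono F" "\<And>k. k < m \<Longrightarrow> F k < 1 / 2" "1 / 2 \<le> F m"
  shows "cdf_increment (majority_limit \<circ> F) =
           (if F m = 1 / 2 then (\<lambda>k. if k \<in> {m, m + 1} then 1 / 2 else 0)
            else (\<lambda>k. if k = m then 1 else 0))"
proof -
  have "majority_limit (F k) = (if k < m then 0 else if k = m then majority_limit (F m) else 1)" for k
  proof -
    consider "k < m" | "k = m" | "m < k"
      by linarith
    then show ?thesis
    proof cases
      case 3
      then have "F m < F k"
        using assms(1) by (simp add: strict_mono_less)
      with 3 assms(3) show ?thesis by (simp add: majority_limit_def)
    qed (use assms(2) in \<open>simp_all add: majority_limit_def\<close>)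
  qed
  then show ?thesis
    using assms(3) by (auto simp: cdf_increment_def majority_limit_def fun_eq_iff)
qed

lemma MedPois_pmf_tendsto:
  assumes "0 < mu"
  shows "(\<lambda>n. pmf (MedPois mu (2 * n + 1)) k) \<longlonglongrightarrow> cdf_increment (majority_limit \<circ> poisson_cdf mu) k"
proof -
  have "(\<lambda>n. measure_pmf.prob (MedPois mu (2 * n + 1)) {..j}) \<longlonglongrightarrow> majority_limit (poisson_cdf mu j)" for j
  proof -
    have "measure_pmf.prob (MedPois mu (2 * n + 1)) {..j} = binomial_majority n (poisson_cdf mu j)" for n
      unfolding MedPois_def prob_sample_median_atMost prob_poisson_atMost[OF assms] ..
    then show ?thesis
      using binomial_majority_tendsto[of "poisson_cdf mu j"] assms
      by (simp add: poisson_cdf_nonneg poisson_cdf_le_1)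
  qed
  then show ?thesis
    unfolding pmf_eq_cdf_increment by (intro tendsto_cdf_increment) simp
qed

theorem mainTheorem4:
  fixes mu :: real
  assumes "mu > 0"
  shows "\<exists>q :: nat \<Rightarrow> real.
           (\<forall>k. (\<lambda>n. pmf (MedPois mu (2 * n + 1)) k) \<longlonglongrightarrow> q k) \<and>
           ((\<exists>m. m \<in> {nat \<lfloor>mu\<rfloor>, nat \<lceil>mu\<rceil>} \<and> q = (\<lambda>k. if k = m then 1 else 0)) \<or>
            (\<exists>m. {m, m + 1} \<inter> {nat \<lfloor>mu\<rfloor>, nat \<lceil>mu\<rceil>} \<noteq> {} \<and>
                 q = (\<lambda>k. if k \<in> {m, m + 1} then 1 / 2 else 0)))"
proof -
  let ?m = "poisson_median mu"
  define q where "q = cdf_increment (majority_limit \<circ> poisson_cdf mu)"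
  have tendsto: "\<forall>k. (\<lambda>n. pmf (MedPois mu (2 * n + 1)) k) \<longlonglongrightarrow> q k"
    unfolding q_def using MedPois_pmf_tendsto[OF assms] by blast
  have q_eq: "q = (if poisson_cdf mu ?m = 1 / 2 then (\<lambda>k. if k \<in> {?m, ?m + 1} then 1 / 2 else 0)
                   else (\<lambda>k. if k = ?m then 1 else 0))"
    unfolding q_def using assms
    by (intro cdf_increment_majority_limit strict_mono_poisson_cdf
        poisson_cdf_below_median poisson_cdf_median_ge_half) auto
  show ?thesis
  proof (cases "poisson_cdf mu ?m = 1 / 2")
    case True
    then show ?thesis
      using tendsto q_eq poisson_median_adjacent_floor_ceiling[OF assms] by auto
  next
    case False
    then have "1 / 2 < poisson_cdf mu ?m"
      using poisson_cdf_median_ge_half[of mu] assms by simp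
    with False show ?thesis
      using tendsto q_eq poisson_median_mem_floor_ceiling[OF assms] by auto
  qed
qed

end
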